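(* Let $(X,\tau)$ be an extended locally convex space with finest locally convex topology $\tau_F$, and let $Y$ be a linear subspace of $X$. Then the relative topology $\tau_F|_Y$ is the finest locally convex topology of the extended locally convex space $(Y,\tau|_Y)$. Moreover, $(Y,\tau_F|_Y)^*=(Y,\tau|_Y)^*$.
   Context: An extended seminorm on a vector space $X$ over $\mathbb{R}$ or $\mathbb{C}$ is a map $\rho:X\to[0,\infty]$ with $\rho(\alpha x)=|\alpha|\rho(x)$ and $\rho(x+y)\le\rho(x)+\rho(y)$. An extended locally convex space $(X,\tau)$ is a vector space with the topology induced by a family $\{\rho_i\}$ of extended seminorms (neighborhood base at $x_0$: $\{x:\max_{i\in J}\rho_i(x-x_0)<\varepsilon\}$, $J$ finite, $\varepsilon>0$). A locally convex topology is one induced in this way by finite-valued seminorms. The finest locally convex topology of an elcs $(X,\tau)$ is the locally convex topology $\tau_F\subseteq\tau$ on $X$ such that every locally convex topology $\sigma\subseteq\tau$ on $X$ satisfies $\sigma\subseteq\tau_F$. For a topological vector-space-like structure $(Z,\sigma)$, $(Z,\sigma)^*$ denotes the set of $\sigma$-continuous linear functionals on $Z$. *)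

theory Defs
  imports "HOL-Analysis.Analysis"
begin

text \<open>All notions are relativised to a carrier set S (a linear subspace of the
ambient vector space 'v over the scalar field 'k, with scalar multiplication sc).
The scalar field is a real_normed_field (in the library: real or complex).\<close>

definition ext_seminorm ::
  "('k::real_normed_field \<Rightarrow> 'v::ab_group_add \<Rightarrow> 'v) \<Rightarrow> 'v set \<Rightarrow> ('v \<Rightarrow> ennreal) \<Rightarrow> bool" where
  "ext_seminorm sc S \<rho> \<longleftrightarrow>
     (\<forall>a. \<forall>x\<in>S. \<rho> (sc a x) = ennreal (norm a) * \<rho> x) \<and>
     (\<forall>x\<in>S. \<forall>y\<in>S. \<rho> (x + y) \<le> \<rho> x + \<rho> y)"

definition fin_seminorm ::
  "('k::real_normed_field \<Rightarrow> 'v::ab_group_add \<Rightarrow> 'v) \<Rightarrow> 'v set \<Rightarrow> ('v \<Rightarrow> ennreal) \<Rightarrow> bool" where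
  "fin_seminorm sc S \<rho> \<longleftrightarrow> ext_seminorm sc S \<rho> \<and> (\<forall>x\<in>S. \<rho> x < \<infinity>)"

definition seminorm_topology :: "'v::ab_group_add set \<Rightarrow> ('v \<Rightarrow> ennreal) set \<Rightarrow> 'v topology" where
  "seminorm_topology S P = topology (\<lambda>U. U \<subseteq> S \<and>
     (\<forall>x0\<in>U. \<exists>J \<epsilon>. finite J \<and> J \<subseteq> P \<and> (\<epsilon>::real) > 0 \<and>
        {x\<in>S. \<forall>\<rho>\<in>J. \<rho> (x - x0) < ennreal \<epsilon>} \<subseteq> U))"

definition elcs_topology ::
  "('k::real_normed_field \<Rightarrow> 'v::ab_group_add \<Rightarrow> 'v) \<Rightarrow> 'v set \<Rightarrow> 'v topology \<Rightarrow> bool" where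
  "elcs_topology sc S \<tau> \<longleftrightarrow>
     (\<exists>P. (\<forall>\<rho>\<in>P. ext_seminorm sc S \<rho>) \<and> \<tau> = seminorm_topology S P)"

definition lc_topology ::
  "('k::real_normed_field \<Rightarrow> 'v::ab_group_add \<Rightarrow> 'v) \<Rightarrow> 'v set \<Rightarrow> 'v topology \<Rightarrow> bool" where
  "lc_topology sc S \<sigma> \<longleftrightarrow>
     (\<exists>P. (\<forall>\<rho>\<in>P. fin_seminorm sc S \<rho>) \<and> \<sigma> = seminorm_topology S P)"

definition coarser :: "'a topology \<Rightarrow> 'a topology \<Rightarrow> bool" where
  "coarser \<sigma> \<tau> \<longleftrightarrow> (\<forall>U. openin \<sigma> U \<longrightarrow> openin \<tau> U)"

definition finest_lc_topology ::
  "('k::real_normed_field \<Rightarrow> 'v::ab_group_add \<Rightarrow> 'v) \<Rightarrow> 'v set \<Rightarrow> 'v topology \<Rightarrow> 'v topology \<Rightarrow> bool" where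
  "finest_lc_topology sc S \<tau> \<tau>F \<longleftrightarrow>
     lc_topology sc S \<tau>F \<and> coarser \<tau>F \<tau> \<and>
     (\<forall>\<sigma>. lc_topology sc S \<sigma> \<and> coarser \<sigma> \<tau> \<longrightarrow> coarser \<sigma> \<tau>F)"

text \<open>Topological dual of (S, sigma): continuous linear functionals on S
(represented extensionally, i.e. undefined outside S).\<close>
definition dual_space ::
  "('k::real_normed_field \<Rightarrow> 'v::ab_group_add \<Rightarrow> 'v) \<Rightarrow> 'v set \<Rightarrow> 'v topology \<Rightarrow> ('v \<Rightarrow> 'k) set" where
  "dual_space sc S \<sigma> = {f. f \<in> extensional S \<and>
     (\<forall>x\<in>S. \<forall>y\<in>S. f (x + y) = f x + f y) \<and>
     (\<forall>a. \<forall>x\<in>S. f (sc a x) = a * f x) \<and>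
     continuous_map \<sigma> euclidean f}"

end

theory Submission
  imports Defs
begin

text \<open>A finite seminorm p on Y whose topology is coarser than \<tau>|Y is dominated on Y by a
multiple of a finite sum r of the extended seminorms defining \<tau>. The infimal convolution of p
with r extends p to an extended seminorm on X below r; precomposing it with a linear retraction
onto the subspace where it is finite makes it finite without changing it there. The topology of
this finite extension is coarser than \<tau>, hence than \<tau>F, and restricts to the topology of p
on Y; so \<tau>F|Y is finest. For the duals, apply this to p = |f| for a \<tau>|Y-continuous linear f.\<close>

section \<open>Topologies induced by seminorms\<close>

definition seminorm_ball :: "'v::ab_group_add set \<Rightarrow> ('v \<Rightarrow> ennreal) set \<Rightarrow> 'v \<Rightarrow> real \<Rightarrow> 'v set"
  where "seminorm_ball S J x0 e = {x\<in>S. \<forall>\<rho>\<in>J. \<rho> (x - x0) < ennreal e}"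

lemma seminorm_ball_antimono:
  "J \<subseteq> J' \<Longrightarrow> e' \<le> e \<Longrightarrow> seminorm_ball S J' x0 e' \<subseteq> seminorm_ball S J x0 e"
  unfolding seminorm_ball_def by (auto intro: less_le_trans ennreal_leI)

lemma openin_seminorm_topology:
  "openin (seminorm_topology S P) U \<longleftrightarrow> U \<subseteq> S \<and>
     (\<forall>x0\<in>U. \<exists>J e. finite J \<and> J \<subseteq> P \<and> e > 0 \<and> seminorm_ball S J x0 e \<subseteq> U)"
proof -
  define is_open where "is_open U \<longleftrightarrow> U \<subseteq> S \<and>
     (\<forall>x0\<in>U. \<exists>J e. finite J \<and> J \<subseteq> P \<and> e > 0 \<and> seminorm_ball S J x0 e \<subseteq> U)" for U
  have "istopology is_open"
    unfolding istopology_def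
  proof (intro conjI allI impI)
    fix U V assume U: "is_open U" and V: "is_open V"
    have "\<exists>J e. finite J \<and> J \<subseteq> P \<and> e > 0 \<and> seminorm_ball S J x0 e \<subseteq> U \<inter> V"
      if "x0 \<in> U \<inter> V" for x0
    proof -
      obtain J1 e1 J2 e2 where "finite J1" "J1 \<subseteq> P" "e1 > 0" "seminorm_ball S J1 x0 e1 \<subseteq> U"
        and "finite J2" "J2 \<subseteq> P" "e2 > 0" "seminorm_ball S J2 x0 e2 \<subseteq> V"
        using U V \<open>x0 \<in> U \<inter> V\<close> unfolding is_open_def by (meson IntD1 IntD2)
      moreover have "seminorm_ball S (J1 \<union> J2) x0 (min e1 e2) \<subseteq> seminorm_ball S J1 x0 e1"
        "seminorm_ball S (J1 \<union> J2) x0 (min e1 e2) \<subseteq> seminorm_ball S J2 x0 e2"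
        by (rule seminorm_ball_antimono; simp)+
      ultimately show ?thesis
        by (intro exI[of _ "J1 \<union> J2"] exI[of _ "min e1 e2"]) auto
    qed
    then show "is_open (U \<inter> V)" using U unfolding is_open_def by blast
  next
    fix K assume "\<forall>U\<in>K. is_open U"
    then show "is_open (\<Union>K)" unfolding is_open_def by (meson Sup_le_iff UnionE UnionI subset_iff)
  qed
  then show ?thesis
    unfolding seminorm_topology_def is_open_def seminorm_ball_def by simp
qed

lemma topspace_seminorm_topology [simp]: "topspace (seminorm_topology S P) = S"
proof -
  have "openin (seminorm_topology S P) S"
    unfolding openin_seminorm_topology seminorm_ball_def
    by (intro conjI ballI exI[of _ "{}"] exI[of _ "1::real"]) auto
  then show ?thesis
    using openin_subset openin_topspace openin_seminorm_topology by (metis subset_antisym)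
qed

lemma ext_seminorm_zero:
  fixes sc :: "'k::real_normed_field \<Rightarrow> 'v::ab_group_add \<Rightarrow> 'v"
  assumes "vector_space sc" "ext_seminorm sc S \<rho>" "0 \<in> S"
  shows "\<rho> 0 = 0"
proof -
  interpret vector_space sc by fact
  have "\<rho> (sc 0 0) = ennreal (norm (0::'k)) * \<rho> 0" using assms(2,3) unfolding ext_seminorm_def by blast
  then show ?thesis by simp
qed

lemma ext_seminorm_subset: "ext_seminorm sc S \<rho> \<Longrightarrow> Y \<subseteq> S \<Longrightarrow> ext_seminorm sc Y \<rho>"
  unfolding ext_seminorm_def by blast

lemma fin_seminorm_subset: "fin_seminorm sc S \<rho> \<Longrightarrow> Y \<subseteq> S \<Longrightarrow> fin_seminorm sc Y \<rho>"
  unfolding fin_seminorm_def using ext_seminorm_subset by blast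

lemma centre_in_seminorm_ball:
  assumes "vector_space sc" "module.subspace sc S" "\<forall>\<rho>\<in>J. ext_seminorm sc S \<rho>" "x0 \<in> S" "e > 0"
  shows "x0 \<in> seminorm_ball S J x0 e"
proof -
  interpret vector_space sc by fact
  have "\<rho> (x0 - x0) < ennreal e" if "\<rho> \<in> J" for \<rho>
    using ext_seminorm_zero[of sc S \<rho>] assms subspace_0 that by simp
  then show ?thesis using assms(4) unfolding seminorm_ball_def by blast
qed

lemma openin_seminorm_ball_singleton:
  assumes "vector_space sc" "module.subspace sc S" "ext_seminorm sc S \<rho>" "\<rho> \<in> P" "x0 \<in> S"
  shows "openin (seminorm_topology S P) (seminorm_ball S {\<rho>} x0 e)"
  unfolding openin_seminorm_topology
proof (intro conjI ballI)
  interpret vector_space sc by fact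
  fix x1 assume x1: "x1 \<in> seminorm_ball S {\<rho>} x0 e"
  then obtain r where r: "\<rho> (x1 - x0) = ennreal r" "0 \<le> r" "r < e"
    unfolding seminorm_ball_def
    by (cases "\<rho> (x1 - x0)" rule: ennreal_cases) (auto simp: ennreal_less_iff)
  have "seminorm_ball S {\<rho>} x1 (e - r) \<subseteq> seminorm_ball S {\<rho>} x0 e"
  proof
    fix x assume x: "x \<in> seminorm_ball S {\<rho>} x1 (e - r)"
    have "x - x1 \<in> S" "x1 - x0 \<in> S"
      using assms(2,5) x x1 by (auto simp: seminorm_ball_def intro: subspace_diff)
    have "\<rho> (x - x0) = \<rho> ((x - x1) + (x1 - x0))" by simp
    also have "\<dots> \<le> \<rho> (x - x1) + \<rho> (x1 - x0)"
      using assms(3) \<open>x - x1 \<in> S\<close> \<open>x1 - x0 \<in> S\<close> unfolding ext_seminorm_def by blast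
    also have "\<dots> < ennreal (e - r) + ennreal r"
      using x r(1) by (simp add: seminorm_ball_def ennreal_add_left_cancel_less add.commute)
    also have "\<dots> = ennreal e" using r by (simp flip: ennreal_plus)
    finally show "x \<in> seminorm_ball S {\<rho>} x0 e" using x by (simp add: seminorm_ball_def)
  qed
  then show "\<exists>J e'. finite J \<and> J \<subseteq> P \<and> e' > 0 \<and> seminorm_ball S J x1 e' \<subseteq> seminorm_ball S {\<rho>} x0 e"
    using assms(4) r by (intro exI[of _ "{\<rho>}"] exI[of _ "e - r"]) auto
qed (auto simp: seminorm_ball_def)

lemma openin_seminorm_ball:
  assumes "vector_space sc" "module.subspace sc S" "\<forall>\<rho>\<in>P. ext_seminorm sc S \<rho>"
    and "finite J" "J \<subseteq> P" "x0 \<in> S"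
  shows "openin (seminorm_topology S P) (seminorm_ball S J x0 e)"
proof -
  have "seminorm_ball S J x0 e = (\<Inter>\<rho>\<in>J. seminorm_ball S {\<rho>} x0 e) \<inter> topspace (seminorm_topology S P)"
    by (auto simp: seminorm_ball_def)
  also have "openin (seminorm_topology S P) \<dots>"
    using assms by (intro openin_INT openin_seminorm_ball_singleton[OF assms(1,2)]) auto
  finally show ?thesis .
qed

lemma coarser_trans: "coarser A B \<Longrightarrow> coarser B C \<Longrightarrow> coarser A C"
  unfolding coarser_def by blast

lemma coarser_subtopology: "coarser \<sigma> \<tau> \<Longrightarrow> coarser (subtopology \<sigma> Y) (subtopology \<tau> Y)"
  unfolding coarser_def openin_subtopology by blast

lemma continuous_map_coarser:
  "coarser \<sigma> \<tau> \<Longrightarrow> topspace \<sigma> = topspace \<tau> \<Longrightarrow> continuous_map \<sigma> X f \<Longrightarrow> continuous_map \<tau> X f"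
  unfolding continuous_map_def coarser_def by auto

lemma coarser_seminorm_topology_mono:
  "P' \<subseteq> P \<Longrightarrow> coarser (seminorm_topology S P') (seminorm_topology S P)"
  unfolding coarser_def openin_seminorm_topology by (meson order_trans)

lemma coarser_seminorm_topologyI:
  assumes "vector_space sc" "module.subspace sc S" "\<forall>\<rho>\<in>P. ext_seminorm sc S \<rho>"
    and "topspace \<tau> = S" "\<forall>\<rho>\<in>P. \<forall>x0\<in>S. \<forall>e. openin \<tau> (seminorm_ball S {\<rho>} x0 e)"
  shows "coarser (seminorm_topology S P) \<tau>"
  unfolding coarser_def
proof (intro allI impI)
  fix U assume U: "openin (seminorm_topology S P) U"
  show "openin \<tau> U"
  proof (subst openin_subopen, intro ballI)
    fix x0 assume "x0 \<in> U"
    then obtain J e where J: "finite J" "J \<subseteq> P" "e > 0" "seminorm_ball S J x0 e \<subseteq> U"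
      using U unfolding openin_seminorm_topology by blast
    have x0: "x0 \<in> S" using U \<open>x0 \<in> U\<close> unfolding openin_seminorm_topology by blast
    have "openin \<tau> ((\<Inter>\<rho>\<in>J. seminorm_ball S {\<rho>} x0 e) \<inter> topspace \<tau>)"
      using assms(5) J(2) x0 by (intro openin_INT[OF J(1)]) blast
    also have "(\<Inter>\<rho>\<in>J. seminorm_ball S {\<rho>} x0 e) \<inter> topspace \<tau> = seminorm_ball S J x0 e"
      using assms(4) by (auto simp: seminorm_ball_def)
    moreover have "x0 \<in> seminorm_ball S J x0 e"
      by (rule centre_in_seminorm_ball[OF assms(1,2)]) (use assms(3) J x0 in auto)
    ultimately show "\<exists>T. openin \<tau> T \<and> x0 \<in> T \<and> T \<subseteq> U"
      using J(4) by blast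
  qed
qed

lemma subtopology_seminorm_topology:
  assumes "vector_space sc" "module.subspace sc S" "module.subspace sc Y" "Y \<subseteq> S"
    and "\<forall>\<rho>\<in>P. ext_seminorm sc S \<rho>"
  shows "subtopology (seminorm_topology S P) Y = seminorm_topology Y P"
  unfolding topology_eq
proof (intro allI iffI)
  fix U assume "openin (subtopology (seminorm_topology S P) Y) U"
  then obtain V where V: "openin (seminorm_topology S P) V" "U = V \<inter> Y"
    by (auto simp: openin_subtopology)
  show "openin (seminorm_topology Y P) U"
    unfolding openin_seminorm_topology
  proof (intro conjI ballI)
    show "U \<subseteq> Y" using V(2) by blast
    fix x0 assume "x0 \<in> U"
    then obtain J e where J: "finite J" "J \<subseteq> P" "e > 0" "seminorm_ball S J x0 e \<subseteq> V"
      using V unfolding openin_seminorm_topology by blast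
    moreover have "seminorm_ball Y J x0 e \<subseteq> seminorm_ball S J x0 e \<inter> Y"
      using assms(4) by (auto simp: seminorm_ball_def)
    ultimately show "\<exists>J e. finite J \<and> J \<subseteq> P \<and> e > 0 \<and> seminorm_ball Y J x0 e \<subseteq> U"
      using V(2) by (intro exI[of _ J] exI[of _ e]) auto
  qed
next
  fix U assume U: "openin (seminorm_topology Y P) U"
  show "openin (subtopology (seminorm_topology S P) Y) U"
  proof (subst openin_subopen, intro ballI)
    fix x0 assume "x0 \<in> U"
    then obtain J e where J: "finite J" "J \<subseteq> P" "e > 0" "seminorm_ball Y J x0 e \<subseteq> U"
      using U unfolding openin_seminorm_topology by blast
    have x0: "x0 \<in> Y" using U \<open>x0 \<in> U\<close> unfolding openin_seminorm_topology by blast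
    have "seminorm_ball Y J x0 e = seminorm_ball S J x0 e \<inter> Y"
      using assms(4) by (auto simp: seminorm_ball_def)
    then have "openin (subtopology (seminorm_topology S P) Y) (seminorm_ball Y J x0 e)"
      using openin_seminorm_ball[OF assms(1,2,5) J(1,2)] x0 assms(4)
      by (auto simp: openin_subtopology intro!: exI[of _ "seminorm_ball S J x0 e"])
    moreover have "x0 \<in> seminorm_ball Y J x0 e"
      using J(2,3) x0 assms(5) ext_seminorm_subset[OF _ assms(4)]
      by (intro centre_in_seminorm_ball[OF assms(1,3)]) (auto simp: subset_iff)
    ultimately show "\<exists>T. openin (subtopology (seminorm_topology S P) Y) T \<and> x0 \<in> T \<and> T \<subseteq> U"
      using J(4) by blast
  qed
qed

lemma elcs_topology_subtopology:
  assumes "vector_space sc" "module.subspace sc S" "module.subspace sc Y" "Y \<subseteq> S"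
    and "elcs_topology sc S \<tau>"
  shows "elcs_topology sc Y (subtopology \<tau> Y)"
proof -
  obtain P where "\<forall>\<rho>\<in>P. ext_seminorm sc S \<rho>" "\<tau> = seminorm_topology S P"
    using assms(5) unfolding elcs_topology_def by blast
  then show ?thesis
    using subtopology_seminorm_topology[OF assms(1-4)] ext_seminorm_subset[OF _ assms(4)]
    unfolding elcs_topology_def by metis
qed

lemma lc_topology_subtopology:
  assumes "vector_space sc" "module.subspace sc S" "module.subspace sc Y" "Y \<subseteq> S"
    and "lc_topology sc S \<tau>"
  shows "lc_topology sc Y (subtopology \<tau> Y)"
proof -
  obtain P where "\<forall>\<rho>\<in>P. fin_seminorm sc S \<rho>" "\<tau> = seminorm_topology S P"
    using assms(5) unfolding lc_topology_def by blast
  then show ?thesis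
    using subtopology_seminorm_topology[OF assms(1-4)] fin_seminorm_subset[OF _ assms(4)]
    unfolding lc_topology_def fin_seminorm_def by metis
qed

section \<open>Domination by finitely many seminorms\<close>

lemma ext_seminorm_scaled_sum:
  assumes "\<forall>\<rho>\<in>J. ext_seminorm sc S \<rho>"
  shows "ext_seminorm sc S (\<lambda>x. ennreal t * (\<Sum>\<rho>\<in>J. \<rho> x))"
  unfolding ext_seminorm_def
proof (intro conjI ballI allI)
  fix a x assume "x \<in> S"
  then have "(\<Sum>\<rho>\<in>J. \<rho> (sc a x)) = ennreal (norm a) * (\<Sum>\<rho>\<in>J. \<rho> x)"
    using assms unfolding ext_seminorm_def sum_distrib_left by (intro sum.cong) auto
  then show "ennreal t * (\<Sum>\<rho>\<in>J. \<rho> (sc a x)) = ennreal (norm a) * (ennreal t * (\<Sum>\<rho>\<in>J. \<rho> x))"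
    by (simp add: ac_simps)
next
  fix x y assume "x \<in> S" "y \<in> S"
  then have "(\<Sum>\<rho>\<in>J. \<rho> (x + y)) \<le> (\<Sum>\<rho>\<in>J. \<rho> x) + (\<Sum>\<rho>\<in>J. \<rho> y)"
    using assms unfolding ext_seminorm_def sum.distrib[symmetric] by (intro sum_mono) blast
  then show "ennreal t * (\<Sum>\<rho>\<in>J. \<rho> (x + y))
      \<le> ennreal t * (\<Sum>\<rho>\<in>J. \<rho> x) + ennreal t * (\<Sum>\<rho>\<in>J. \<rho> y)"
    by (simp add: mult_left_mono flip: distrib_left)
qed

lemma coarser_seminorm_topology_if_dominated:
  assumes "vector_space sc" "module.subspace sc S" "finite J" "J \<subseteq> P" "t > 0"
    and dom: "\<forall>x\<in>S. p x \<le> ennreal t * (\<Sum>\<rho>\<in>J. \<rho> x)"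
  shows "coarser (seminorm_topology S {p}) (seminorm_topology S P)"
proof -
  interpret vector_space sc by fact
  have ball: "seminorm_ball S J x0 d \<subseteq> seminorm_ball S {p} x0 e"
    if "x0 \<in> S" "e > 0" and d: "d = e / (t * (real (card J) + 1))" for x0 e d
  proof
    fix x assume x: "x \<in> seminorm_ball S J x0 d"
    have "d > 0" using d \<open>e > 0\<close> \<open>t > 0\<close> by simp
    have "t * (real (card J) * d) < t * ((real (card J) + 1) * d)"
      using \<open>t > 0\<close> \<open>d > 0\<close> by simp
    also have "\<dots> = d * (t * (real (card J) + 1))" by (simp add: algebra_simps)
    also have "\<dots> = e" using d \<open>t > 0\<close> by (simp add: add_pos_nonneg)
    finally have td: "t * (real (card J) * d) < e" .
    have "p (x - x0) \<le> ennreal t * (\<Sum>\<rho>\<in>J. \<rho> (x - x0))"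
      using dom x \<open>x0 \<in> S\<close> assms(2) subspace_diff by (auto simp: seminorm_ball_def)
    also have "\<dots> \<le> ennreal t * (\<Sum>\<rho>\<in>J. ennreal d)"
      using x by (intro mult_left_mono sum_mono) (auto simp: seminorm_ball_def less_imp_le)
    also have "\<dots> = ennreal (t * (real (card J) * d))"
      using \<open>t > 0\<close> \<open>d > 0\<close> by (simp add: ennreal_mult ennreal_of_nat_eq_real_of_nat)
    also have "\<dots> < ennreal e" using td \<open>e > 0\<close> by (simp add: ennreal_lessI)
    finally show "x \<in> seminorm_ball S {p} x0 e" using x by (simp add: seminorm_ball_def)
  qed
  show ?thesis
    unfolding coarser_def openin_seminorm_topology
  proof (intro allI impI conjI ballI; elim conjE)
    fix U x0
    assume "U \<subseteq> S" and U: "\<forall>x0\<in>U. \<exists>J' e. finite J' \<and> J' \<subseteq> {p} \<and> e > 0 \<and> seminorm_ball S J' x0 e \<subseteq> U"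
      and "x0 \<in> U"
    then obtain J' e where "J' \<subseteq> {p}" "e > 0" "seminorm_ball S J' x0 e \<subseteq> U" by blast
    then have "seminorm_ball S {p} x0 e \<subseteq> U" using seminorm_ball_antimono[of J' "{p}"] by blast
    then show "\<exists>J e. finite J \<and> J \<subseteq> P \<and> e > 0 \<and> seminorm_ball S J x0 e \<subseteq> U"
      using ball[of x0 e] \<open>e > 0\<close> \<open>U \<subseteq> S\<close> \<open>x0 \<in> U\<close> assms(3-5)
      by (intro exI[of _ J] exI[of _ "e / (t * (real (card J) + 1))"]) auto
  qed
qed

lemma fin_seminorm_le_if_lt_one_on_ball:
  fixes sc :: "'k::real_normed_field \<Rightarrow> 'v::ab_group_add \<Rightarrow> 'v"
  assumes "vector_space sc" "module.subspace sc S" "fin_seminorm sc S p" "ext_seminorm sc S q"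
    and "e > 0" and ball: "\<forall>x\<in>S. q x < ennreal e \<longrightarrow> p x < 1" and "y \<in> S"
  shows "p y \<le> ennreal (1 / e) * q y"
proof -
  interpret vector_space sc by fact
  obtain b where b: "p y = ennreal b" "b \<ge> 0"
    using assms(3,7) unfolding fin_seminorm_def by (cases "p y" rule: ennreal_cases) auto
  show ?thesis
  proof (cases "q y = \<infinity> \<or> b = 0")
    case False
    then obtain a where a: "q y = ennreal a" "a \<ge> 0" by (cases "q y" rule: ennreal_cases) auto
    have "b > 0" using False b by simp
    define s :: 'k where "s = of_real (1 / b)"
    have norm_s: "norm s = 1 / b" using \<open>b > 0\<close> unfolding s_def norm_of_real by simp
    have p_sy: "p (sc s y) = 1"
      using assms(3,7) norm_s b \<open>b > 0\<close> unfolding fin_seminorm_def ext_seminorm_def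
      by (simp flip: ennreal_mult)
    have q_sy: "q (sc s y) = ennreal (a / b)"
      using assms(4,7) norm_s a \<open>b > 0\<close> unfolding ext_seminorm_def by (simp flip: ennreal_mult)
    have "sc s y \<in> S" using assms(2,7) subspace_scale by blast
    have "\<not> a / b < e"
    proof
      assume "a / b < e"
      then have "q (sc s y) < ennreal e" using q_sy \<open>e > 0\<close> by (simp add: ennreal_lessI)
      then have "p (sc s y) < 1" using ball \<open>sc s y \<in> S\<close> by blast
      then show False using p_sy by simp
    qed
    then have "b \<le> 1 / e * a" using \<open>b > 0\<close> \<open>e > 0\<close> by (simp add: field_simps)
    then show ?thesis using a b \<open>e > 0\<close> by (simp add: ennreal_leI flip: ennreal_mult)
  qed (use \<open>e > 0\<close> in \<open>auto simp: b ennreal_mult_top ennreal_eq_0_iff\<close>)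
qed

lemma dominated_if_coarser_seminorm_topology:
  fixes sc :: "'k::real_normed_field \<Rightarrow> 'v::ab_group_add \<Rightarrow> 'v"
  assumes "vector_space sc" "module.subspace sc S" "\<forall>\<rho>\<in>P. ext_seminorm sc S \<rho>"
    and p: "fin_seminorm sc S p" and coarser: "coarser (seminorm_topology S {p}) (seminorm_topology S P)"
  obtains J t where "finite J" "J \<subseteq> P" "t > 0" "\<forall>x\<in>S. p x \<le> ennreal t * (\<Sum>\<rho>\<in>J. \<rho> x)"
proof -
  interpret vector_space sc by fact
  have "openin (seminorm_topology S {p}) (seminorm_ball S {p} 0 1)"
    using p subspace_0[OF assms(2)] by (intro openin_seminorm_ball[OF assms(1,2)]) (auto simp: fin_seminorm_def)
  then have "openin (seminorm_topology S P) (seminorm_ball S {p} 0 1)"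
    using coarser unfolding coarser_def by blast
  moreover have "0 \<in> seminorm_ball S {p} 0 1"
    using p subspace_0[OF assms(2)] by (intro centre_in_seminorm_ball[OF assms(1,2)]) (auto simp: fin_seminorm_def)
  ultimately have "\<exists>J e. finite J \<and> J \<subseteq> P \<and> e > 0 \<and> seminorm_ball S J 0 e \<subseteq> seminorm_ball S {p} 0 1"
    unfolding openin_seminorm_topology by blast
  then obtain J e where J: "finite J" "J \<subseteq> P" "e > 0"
    and ball: "seminorm_ball S J 0 e \<subseteq> seminorm_ball S {p} 0 1"
    by blast
  have sum: "ext_seminorm sc S (\<lambda>x. \<Sum>\<rho>\<in>J. \<rho> x)"
    using ext_seminorm_scaled_sum[of J sc S 1] assms(3) J(2) by auto
  have "p x < 1" if "x \<in> S" "(\<Sum>\<rho>\<in>J. \<rho> x) < ennreal e" for x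
  proof -
    have "\<rho> x < ennreal e" if "\<rho> \<in> J" for \<rho>
      using member_le_sum[OF that _ J(1), of "\<lambda>\<rho>. \<rho> x"] \<open>(\<Sum>\<rho>\<in>J. \<rho> x) < ennreal e\<close> by simp
    then show ?thesis using ball \<open>x \<in> S\<close> by (auto simp: seminorm_ball_def)
  qed
  then have "\<forall>x\<in>S. p x \<le> ennreal (1 / e) * (\<Sum>\<rho>\<in>J. \<rho> x)"
    using fin_seminorm_le_if_lt_one_on_ball[OF assms(1,2) p sum J(3)] by blast
  then show ?thesis using J by (intro that[of J "1 / e"]) auto
qed

section \<open>Extending a seminorm from a subspace\<close>

lemma ennreal_le_Inf_add:
  fixes z :: ennreal
  assumes "\<And>a b. a \<in> A \<Longrightarrow> b \<in> B \<Longrightarrow> z \<le> a + b"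
  shows "z \<le> Inf A + Inf B"
proof (rule ennreal_le_epsilon)
  fix e :: real assume fin: "Inf A + Inf B < top" and "0 < e"
  then have "Inf A \<noteq> top" "Inf B \<noteq> top"
    by (simp_all add: less_top[symmetric] ennreal_add_eq_top)
  then have "Inf A + 0 < Inf A + ennreal (e/2)" "Inf B + 0 < Inf B + ennreal (e/2)"
    using \<open>0 < e\<close> by (simp_all only: ennreal_add_left_cancel_less) simp_all
  then have "Inf A < Inf A + ennreal (e/2)" "Inf B < Inf B + ennreal (e/2)" by simp_all
  then obtain a b where ab: "a \<in> A" "a < Inf A + ennreal (e/2)" "b \<in> B" "b < Inf B + ennreal (e/2)"
    by (meson Inf_less_iff)
  have "z \<le> a + b" using assms ab by blast
  also have "\<dots> \<le> (Inf A + ennreal (e/2)) + (Inf B + ennreal (e/2))"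
    using ab by (intro add_mono) auto
  also have "\<dots> = Inf A + Inf B + ennreal e"
    using \<open>0 < e\<close> by (simp add: ac_simps flip: ennreal_plus)
  finally show "z \<le> Inf A + Inf B + ennreal e" .
qed

lemma ennreal_le_mult_Inf:
  fixes z :: ennreal
  assumes "t > 0" "\<And>a. a \<in> A \<Longrightarrow> z \<le> ennreal t * a"
  shows "z \<le> ennreal t * Inf A"
proof -
  have cancel: "ennreal t * (ennreal (1/t) * w) = w" "ennreal (1/t) * (ennreal t * w) = w" for w
    using assms(1) by (simp_all add: mult.assoc[symmetric] flip: ennreal_mult)
  have "ennreal (1/t) * z \<le> Inf A"
  proof (rule Inf_greatest)
    fix a assume "a \<in> A"
    then have "ennreal (1/t) * z \<le> ennreal (1/t) * (ennreal t * a)"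
      using assms(2) by (intro mult_left_mono) auto
    then show "ennreal (1/t) * z \<le> a" by (simp only: cancel)
  qed
  then have "ennreal t * (ennreal (1/t) * z) \<le> ennreal t * Inf A" by (intro mult_left_mono) auto
  then show ?thesis by (simp only: cancel)
qed

definition inf_convolution :: "'v::ab_group_add set \<Rightarrow> ('v \<Rightarrow> ennreal) \<Rightarrow> ('v \<Rightarrow> ennreal) \<Rightarrow> 'v \<Rightarrow> ennreal"
  where "inf_convolution Y p r x = (INF y\<in>Y. p y + r (x - y))"

lemma inf_convolution_le:
  assumes "0 \<in> Y" "p 0 = 0"
  shows "inf_convolution Y p r x \<le> r x"
  unfolding inf_convolution_def using assms by (intro INF_lower2[of 0]) simp_all

lemma inf_convolution_eq:
  assumes "vector_space sc" "module.subspace sc Y" "ext_seminorm sc Y p"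
    and "ext_seminorm sc UNIV r" "\<forall>y\<in>Y. p y \<le> r y" "y \<in> Y"
  shows "inf_convolution Y p r y = p y"
proof (rule antisym)
  interpret vector_space sc by fact
  show "inf_convolution Y p r y \<le> p y"
    unfolding inf_convolution_def
    using ext_seminorm_zero[OF assms(1,4)] assms(6) by (intro INF_lower2) auto
  show "p y \<le> inf_convolution Y p r y"
    unfolding inf_convolution_def
  proof (rule INF_greatest)
    fix z assume "z \<in> Y"
    then have "y - z \<in> Y" using assms(2,6) subspace_diff by blast
    have "p y = p (z + (y - z))" by simp
    also have "\<dots> \<le> p z + p (y - z)"
      using assms(3) \<open>z \<in> Y\<close> \<open>y - z \<in> Y\<close> unfolding ext_seminorm_def by blast
    also have "\<dots> \<le> p z + r (y - z)" using assms(5) \<open>y - z \<in> Y\<close> by (intro add_left_mono) auto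
    finally show "p y \<le> p z + r (y - z)" .
  qed
qed

lemma inf_convolution_add:
  assumes "vector_space sc" "module.subspace sc Y" "ext_seminorm sc Y p" "ext_seminorm sc UNIV r"
  shows "inf_convolution Y p r (x1 + x2) \<le> inf_convolution Y p r x1 + inf_convolution Y p r x2"
  unfolding inf_convolution_def
proof (rule ennreal_le_Inf_add)
  interpret vector_space sc by fact
  fix a b assume "a \<in> (\<lambda>y. p y + r (x1 - y)) ` Y" and "b \<in> (\<lambda>y. p y + r (x2 - y)) ` Y"
  then obtain y1 y2 where y: "y1 \<in> Y" "y2 \<in> Y" "a = p y1 + r (x1 - y1)" "b = p y2 + r (x2 - y2)"
    by blast
  have "(INF y\<in>Y. p y + r (x1 + x2 - y)) \<le> p (y1 + y2) + r ((x1 - y1) + (x2 - y2))"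
    using y assms(2) subspace_add by (intro INF_lower2[of "y1 + y2"]) (auto simp: algebra_simps)
  also have "\<dots> \<le> (p y1 + p y2) + (r (x1 - y1) + r (x2 - y2))"
    using assms(3,4) y unfolding ext_seminorm_def by (intro add_mono) auto
  also have "\<dots> = a + b" using y by (simp add: ac_simps)
  finally show "(INF y\<in>Y. p y + r (x1 + x2 - y)) \<le> a + b" .
qed

lemma inf_convolution_scale:
  fixes sc :: "'k::real_normed_field \<Rightarrow> 'v::ab_group_add \<Rightarrow> 'v"
  assumes "vector_space sc" "module.subspace sc Y" "ext_seminorm sc Y p" "ext_seminorm sc UNIV r"
  shows "inf_convolution Y p r (sc a x) = ennreal (norm a) * inf_convolution Y p r x"
proof -
  interpret vector_space sc by fact
  have le: "inf_convolution Y p r (sc a x) \<le> ennreal (norm a) * inf_convolution Y p r x" for a x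
  proof (cases "a = 0")
    case True
    have "inf_convolution Y p r 0 \<le> r 0"
      using ext_seminorm_zero[OF assms(1,3)] subspace_0[OF assms(2)] by (intro inf_convolution_le) auto
    then show ?thesis using True ext_seminorm_zero[OF assms(1,4)] by simp
  next
    case False
    show ?thesis
      unfolding inf_convolution_def
    proof (rule ennreal_le_mult_Inf)
      show "norm a > 0" using False by simp
      fix e assume "e \<in> (\<lambda>y. p y + r (x - y)) ` Y"
      then obtain y where y: "y \<in> Y" "e = p y + r (x - y)" by blast
      have "(INF y\<in>Y. p y + r (sc a x - y)) \<le> p (sc a y) + r (sc a (x - y))"
        using y assms(2) subspace_scale by (intro INF_lower2[of "sc a y"]) (auto simp: scale_right_diff_distrib)
      also have "\<dots> = ennreal (norm a) * e"
        using assms(3,4) y unfolding ext_seminorm_def by (simp add: distrib_left)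
      finally show "(INF y\<in>Y. p y + r (sc a x - y)) \<le> ennreal (norm a) * e" .
    qed
  qed
  show ?thesis
  proof (cases "a = 0")
    case True
    then show ?thesis using le[of 0 x] by simp
  next
    case False
    have "ennreal (norm a) * inf_convolution Y p r x
        = ennreal (norm a) * inf_convolution Y p r (sc (inverse a) (sc a x))"
      using False by simp
    also have "\<dots> \<le> ennreal (norm a) * (ennreal (norm (inverse a)) * inf_convolution Y p r (sc a x))"
      by (intro mult_left_mono le) simp
    also have "\<dots> = inf_convolution Y p r (sc a x)"
      using False by (simp add: mult.assoc[symmetric] norm_inverse flip: ennreal_mult)
    finally show ?thesis using le[of a x] by (intro antisym)
  qed
qed

lemma ext_seminorm_inf_convolution:
  fixes sc :: "'k::real_normed_field \<Rightarrow> 'v::ab_group_add \<Rightarrow> 'v"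
  assumes "vector_space sc" "module.subspace sc Y" "ext_seminorm sc Y p" "ext_seminorm sc UNIV r"
  shows "ext_seminorm sc UNIV (inf_convolution Y p r)"
  unfolding ext_seminorm_def
  using inf_convolution_scale[OF assms] inf_convolution_add[OF assms] by blast

lemma linear_retraction_exists:
  assumes "vector_space sc" "module.subspace sc M"
  obtains g where "range g \<subseteq> M" "\<forall>x y. g (x + y) = g x + g y" "\<forall>a x. g (sc a x) = sc a (g x)"
    "\<forall>v\<in>M. g v = v"
proof -
  interpret vector_space_pair sc sc using assms(1) by (simp add: vector_space_pair_def)
  obtain g where g: "range g \<subseteq> M" "Vector_Spaces.linear sc sc g" "\<forall>v\<in>M. g v = v"
    using linear_exists_left_inverse_on[of id M] vs1.linear_id assms(2) by auto
  then have "module_hom sc sc g" by (simp add: module_hom_iff_linear)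
  then show ?thesis using g that by (simp add: module_hom.add module_hom.scale)
qed

lemma fin_seminorm_eq_on_finite_domain:
  fixes sc :: "'k::real_normed_field \<Rightarrow> 'v::ab_group_add \<Rightarrow> 'v"
  assumes "vector_space sc" and q: "ext_seminorm sc UNIV q"
  obtains q' where "fin_seminorm sc UNIV q'" "\<forall>x. q' x \<le> q x" "\<forall>x. q x < \<infinity> \<longrightarrow> q' x = q x"
proof -
  interpret vector_space sc by fact
  have q_scale: "q (sc a x) = ennreal (norm a) * q x" and q_add: "q (x + y) \<le> q x + q y" for a x y
    using q unfolding ext_seminorm_def by auto
  define M where "M = {x. q x < \<infinity>}"
  have "subspace M"
  proof (rule subspaceI)
    show "0 \<in> M" using ext_seminorm_zero[OF assms] by (simp add: M_def)
    fix x y assume "x \<in> M" "y \<in> M"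
    then show "x + y \<in> M"
      using q_add[of x y] unfolding M_def
      by (metis ennreal_add_less_top infinity_ennreal_def le_less_trans mem_Collect_eq)
  next
    fix c x assume "x \<in> M"
    then show "sc c x \<in> M" by (simp add: M_def q_scale ennreal_mult_less_top)
  qed
  then obtain g where g: "range g \<subseteq> M" "\<forall>x y. g (x + y) = g x + g y" "\<forall>a x. g (sc a x) = sc a (g x)"
    "\<forall>v\<in>M. g v = v"
    using linear_retraction_exists[OF assms(1)] by blast
  show ?thesis
  proof (rule that[of "q \<circ> g"])
    show "fin_seminorm sc UNIV (q \<circ> g)"
      using g(1) unfolding fin_seminorm_def ext_seminorm_def M_def
      by (auto simp: g(2,3) q_scale q_add)
    show eq: "\<forall>x. q x < \<infinity> \<longrightarrow> (q \<circ> g) x = q x" using g(4) by (simp add: M_def)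
    show "\<forall>x. (q \<circ> g) x \<le> q x"
    proof
      fix x show "(q \<circ> g) x \<le> q x"
        using eq by (cases "q x < \<infinity>") (auto simp: not_less infinity_ennreal_def top_unique)
    qed
  qed
qed

lemma fin_seminorm_extension_dominated:
  fixes sc :: "'k::real_normed_field \<Rightarrow> 'v::ab_group_add \<Rightarrow> 'v"
  assumes "vector_space sc" "module.subspace sc Y" "fin_seminorm sc Y p" "ext_seminorm sc UNIV r"
    and "\<forall>y\<in>Y. p y \<le> r y"
  obtains p' where "fin_seminorm sc UNIV p'" "\<forall>y\<in>Y. p' y = p y" "\<forall>x. p' x \<le> r x"
proof -
  interpret vector_space sc by fact
  have p: "ext_seminorm sc Y p" using assms(3) by (simp add: fin_seminorm_def)
  let ?q = "inf_convolution Y p r"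
  obtain p' where p': "fin_seminorm sc UNIV p'" "\<forall>x. p' x \<le> ?q x" "\<forall>x. ?q x < \<infinity> \<longrightarrow> p' x = ?q x"
    using fin_seminorm_eq_on_finite_domain[OF assms(1) ext_seminorm_inf_convolution[OF assms(1,2) p assms(4)]]
    by blast
  have q_Y: "?q y = p y" if "y \<in> Y" for y
    using inf_convolution_eq[OF assms(1,2) p assms(4,5) that] .
  have "p y < \<infinity>" if "y \<in> Y" for y using assms(3) that by (simp add: fin_seminorm_def)
  then have "\<forall>y\<in>Y. p' y = p y" using p'(3) q_Y by simp
  moreover have "?q x \<le> r x" for x
    using ext_seminorm_zero[OF assms(1) p subspace_0[OF assms(2)]] subspace_0[OF assms(2)]
    by (intro inf_convolution_le)
  then have "\<forall>x. p' x \<le> r x" using p'(2) order_trans by blast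
  ultimately show ?thesis using p'(1) that by blast
qed

section \<open>The finest locally convex topology of a subspace\<close>

lemma coarser_finest_subtopology_if_coarser_subtopology:
  fixes sc :: "'k::real_normed_field \<Rightarrow> 'v::ab_group_add \<Rightarrow> 'v"
  assumes VS: "vector_space sc" and Y: "module.subspace sc Y"
    and "elcs_topology sc UNIV \<tau>" and finest: "finest_lc_topology sc UNIV \<tau> \<tau>F"
    and p: "fin_seminorm sc Y p" and "coarser (seminorm_topology Y {p}) (subtopology \<tau> Y)"
  shows "coarser (seminorm_topology Y {p}) (subtopology \<tau>F Y)"
proof -
  interpret vector_space sc by fact
  obtain P where P: "\<forall>\<rho>\<in>P. ext_seminorm sc UNIV \<rho>" and \<tau>: "\<tau> = seminorm_topology UNIV P"
    using assms(3) unfolding elcs_topology_def by blast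
  have "subtopology \<tau> Y = seminorm_topology Y P"
    unfolding \<tau> using P by (intro subtopology_seminorm_topology[OF VS _ Y]) auto
  moreover have "\<forall>\<rho>\<in>P. ext_seminorm sc Y \<rho>" using P ext_seminorm_subset by blast
  ultimately obtain J t where J: "finite J" "J \<subseteq> P" "t > 0"
    and dom: "\<forall>y\<in>Y. p y \<le> ennreal t * (\<Sum>\<rho>\<in>J. \<rho> y)"
    using dominated_if_coarser_seminorm_topology[OF VS Y _ p] assms(6) by metis
  obtain p' where p': "fin_seminorm sc UNIV p'" "\<forall>y\<in>Y. p' y = p y"
    and p'_le: "\<forall>x. p' x \<le> ennreal t * (\<Sum>\<rho>\<in>J. \<rho> x)"
    using fin_seminorm_extension_dominated[OF VS Y p ext_seminorm_scaled_sum] P J(2) dom by blast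
  have "coarser (seminorm_topology UNIV {p'}) \<tau>"
    unfolding \<tau> using p'_le by (intro coarser_seminorm_topology_if_dominated[OF VS _ J]) auto
  moreover have "lc_topology sc UNIV (seminorm_topology UNIV {p'})"
    unfolding lc_topology_def using p'(1) by blast
  ultimately have "coarser (seminorm_topology UNIV {p'}) \<tau>F"
    using finest unfolding finest_lc_topology_def by blast
  moreover have "subtopology (seminorm_topology UNIV {p'}) Y = seminorm_topology Y {p'}"
    using p'(1) by (intro subtopology_seminorm_topology[OF VS subspace_UNIV Y]) (auto simp: fin_seminorm_def)
  ultimately have "coarser (seminorm_topology Y {p'}) (subtopology \<tau>F Y)"
    using coarser_subtopology by metis
  moreover have "coarser (seminorm_topology Y {p}) (seminorm_topology Y {p'})"
    using p'(2) by (intro coarser_seminorm_topology_if_dominated[OF VS Y, of "{p'}" _ 1]) auto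
  ultimately show ?thesis using coarser_trans by blast
qed

lemma finest_lc_topology_subtopology:
  fixes sc :: "'k::real_normed_field \<Rightarrow> 'v::ab_group_add \<Rightarrow> 'v"
  assumes VS: "vector_space sc" and Y: "module.subspace sc Y"
    and elcs: "elcs_topology sc UNIV \<tau>" and finest: "finest_lc_topology sc UNIV \<tau> \<tau>F"
  shows "finest_lc_topology sc Y (subtopology \<tau> Y) (subtopology \<tau>F Y)"
  unfolding finest_lc_topology_def
proof (intro conjI allI impI)
  interpret vector_space sc by fact
  have "lc_topology sc UNIV \<tau>F" "coarser \<tau>F \<tau>"
    using finest unfolding finest_lc_topology_def by blast+
  then show "coarser (subtopology \<tau>F Y) (subtopology \<tau> Y)"
    using coarser_subtopology by blast
  show lc: "lc_topology sc Y (subtopology \<tau>F Y)"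
    using lc_topology_subtopology[OF VS subspace_UNIV Y] \<open>lc_topology sc UNIV \<tau>F\<close> by blast
  then obtain Q where "subtopology \<tau>F Y = seminorm_topology Y Q"
    unfolding lc_topology_def by blast
  then have top: "topspace (subtopology \<tau>F Y) = Y" by simp
  fix \<sigma> assume "lc_topology sc Y \<sigma> \<and> coarser \<sigma> (subtopology \<tau> Y)"
  then have "lc_topology sc Y \<sigma>" and \<sigma>: "coarser \<sigma> (subtopology \<tau> Y)" by blast+
  then obtain R where R: "\<forall>\<rho>\<in>R. fin_seminorm sc Y \<rho>" and \<sigma>_eq: "\<sigma> = seminorm_topology Y R"
    unfolding lc_topology_def by blast
  then have R_ext: "\<forall>\<rho>\<in>R. ext_seminorm sc Y \<rho>" by (simp add: fin_seminorm_def)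
  have "openin (subtopology \<tau>F Y) (seminorm_ball Y {\<rho>} x0 e)" if "\<rho> \<in> R" "x0 \<in> Y" for \<rho> x0 e
  proof -
    have "coarser (seminorm_topology Y {\<rho>}) (subtopology \<tau> Y)"
      using coarser_trans[OF coarser_seminorm_topology_mono \<sigma>[unfolded \<sigma>_eq]] that(1) by blast
    then have "coarser (seminorm_topology Y {\<rho>}) (subtopology \<tau>F Y)"
      using coarser_finest_subtopology_if_coarser_subtopology[OF VS Y elcs finest] R that(1) by blast
    moreover have "openin (seminorm_topology Y {\<rho>}) (seminorm_ball Y {\<rho>} x0 e)"
      using R_ext that by (intro openin_seminorm_ball[OF VS Y]) auto
    ultimately show ?thesis unfolding coarser_def by blast
  qed
  then show "coarser \<sigma> (subtopology \<tau>F Y)"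
    unfolding \<sigma>_eq using R_ext top by (intro coarser_seminorm_topologyI[OF VS Y]) auto
qed

lemma fin_seminorm_norm_linear:
  assumes "\<forall>x\<in>Y. \<forall>y\<in>Y. f (x + y) = f x + f y" "\<forall>a. \<forall>x\<in>Y. f (sc a x) = a * f x"
  shows "fin_seminorm sc Y (\<lambda>y. ennreal (norm (f y)))"
  using assms unfolding fin_seminorm_def ext_seminorm_def
  by (simp add: norm_mult ennreal_mult norm_triangle_ineq flip: ennreal_plus)

lemma seminorm_ball_norm_linear:
  assumes "vector_space sc" "module.subspace sc Y" "\<forall>x\<in>Y. \<forall>y\<in>Y. f (x + y) = f x + f y" "x0 \<in> Y"
  shows "seminorm_ball Y {\<lambda>y. ennreal (norm (f y))} x0 e = {x\<in>Y. f x \<in> ball (f x0) e}"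
proof -
  interpret vector_space sc by fact
  have "f (x - x0) = f x - f x0" if "x \<in> Y" for x
  proof -
    have "f x = f ((x - x0) + x0)" by simp
    also have "\<dots> = f (x - x0) + f x0" using assms(2-4) that subspace_diff by blast
    finally show ?thesis by (simp add: algebra_simps)
  qed
  then show ?thesis
    by (auto simp: seminorm_ball_def dist_norm norm_minus_commute ennreal_less_iff)
qed

lemma continuous_map_seminorm_topology_norm:
  fixes sc :: "'k::real_normed_field \<Rightarrow> 'v::ab_group_add \<Rightarrow> 'v" and f :: "'v \<Rightarrow> 'k"
  assumes "vector_space sc" "module.subspace sc Y" "\<forall>x\<in>Y. \<forall>y\<in>Y. f (x + y) = f x + f y"
  shows "continuous_map (seminorm_topology Y {\<lambda>y. ennreal (norm (f y))}) euclidean f"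
  unfolding continuous_map_def topspace_seminorm_topology
proof (intro conjI allI impI)
  show "f \<in> Y \<rightarrow> topspace euclidean" by simp
  fix V :: "'k set" assume "openin euclidean V"
  show "openin (seminorm_topology Y {\<lambda>y. ennreal (norm (f y))}) {x \<in> Y. f x \<in> V}"
    unfolding openin_seminorm_topology
  proof (intro conjI ballI)
    fix x0 assume x0: "x0 \<in> {x \<in> Y. f x \<in> V}"
    then obtain e where "e > 0" "ball (f x0) e \<subseteq> V"
      using open_contains_ball[THEN iffD1] \<open>openin euclidean V\<close> by force
    then show "\<exists>J e. finite J \<and> J \<subseteq> {\<lambda>y. ennreal (norm (f y))} \<and> e > 0 \<and>
        seminorm_ball Y J x0 e \<subseteq> {x \<in> Y. f x \<in> V}"
      using seminorm_ball_norm_linear[OF assms, of x0 e] x0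
      by (intro exI[of _ "{\<lambda>y. ennreal (norm (f y))}"] exI[of _ e]) auto
  qed auto
qed

lemma dual_space_finest_lc_topology:
  fixes sc :: "'k::real_normed_field \<Rightarrow> 'v::ab_group_add \<Rightarrow> 'v"
  assumes VS: "vector_space sc" and Y: "module.subspace sc Y"
    and "elcs_topology sc Y \<tau>" and finest: "finest_lc_topology sc Y \<tau> \<tau>F"
  shows "dual_space sc Y \<tau>F = dual_space sc Y \<tau>"
proof -
  have top: "topspace \<tau> = Y" "topspace \<tau>F = Y"
    using assms(3) finest unfolding elcs_topology_def finest_lc_topology_def lc_topology_def by auto
  have "coarser \<tau>F \<tau>" using finest unfolding finest_lc_topology_def by blast
  then have "continuous_map \<tau> euclidean f" if "continuous_map \<tau>F euclidean f" for f :: "'v \<Rightarrow> 'k"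
    using continuous_map_coarser that top by fastforce
  moreover have "continuous_map \<tau>F euclidean f"
    if add: "\<forall>x\<in>Y. \<forall>y\<in>Y. f (x + y) = f x + f y" and "\<forall>a. \<forall>x\<in>Y. f (sc a x) = a * f x"
      and cont: "continuous_map \<tau> euclidean f" for f
  proof -
    let ?p = "\<lambda>y. ennreal (norm (f y))"
    have fin: "fin_seminorm sc Y ?p" using fin_seminorm_norm_linear that(1,2) .
    have "openin \<tau> (seminorm_ball Y {?p} x0 e)" if "x0 \<in> Y" for x0 e
      unfolding seminorm_ball_norm_linear[OF VS Y add that]
      using openin_continuous_map_preimage[OF cont, of "ball (f x0) e"] top by simp
    then have "coarser (seminorm_topology Y {?p}) \<tau>"
      using fin top by (intro coarser_seminorm_topologyI[OF VS Y]) (auto simp: fin_seminorm_def)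
    moreover have "lc_topology sc Y (seminorm_topology Y {?p})"
      unfolding lc_topology_def using fin by blast
    ultimately have "coarser (seminorm_topology Y {?p}) \<tau>F"
      using finest unfolding finest_lc_topology_def by blast
    then show ?thesis
      using continuous_map_coarser continuous_map_seminorm_topology_norm[OF VS Y add] top by fastforce
  qed
  ultimately show ?thesis unfolding dual_space_def by blast
qed

theorem theorem4p1:
  fixes sc :: "'k::real_normed_field \<Rightarrow> 'v::ab_group_add \<Rightarrow> 'v"
    and \<tau> \<tau>F :: "'v topology" and Y :: "'v set"
  assumes "vector_space sc"
    and "elcs_topology sc UNIV \<tau>"
    and "finest_lc_topology sc UNIV \<tau> \<tau>F"
    and "module.subspace sc Y"
  shows "elcs_topology sc Y (subtopology \<tau> Y)
     \<and> finest_lc_topology sc Y (subtopology \<tau> Y) (subtopology \<tau>F Y)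
     \<and> dual_space sc Y (subtopology \<tau>F Y) = dual_space sc Y (subtopology \<tau> Y)"
proof -
  interpret vector_space sc by fact
  have elcs: "elcs_topology sc Y (subtopology \<tau> Y)"
    using elcs_topology_subtopology[OF assms(1) subspace_UNIV assms(4)] assms(2) by blast
  have finest: "finest_lc_topology sc Y (subtopology \<tau> Y) (subtopology \<tau>F Y)"
    using finest_lc_topology_subtopology[OF assms(1,4,2,3)] .
  show ?thesis
    using elcs finest dual_space_finest_lc_topology[OF assms(1,4) elcs finest] by blast
qed

end
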